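(* Let $A,B\in\mathrm{SL}_2\mathbb{Z}_{\ge0}$ be noncommuting, well oriented, with $\mathrm{tr}(A)<\mathrm{tr}(B)$ and $\mathrm{tr}(AB)=\mathrm{tr}(B^2)$. Let $w$ be a word that is empty or begins with $a$, and let $s\ge0$. Then: (1) $[wab^4(ab^2)^sab^3]<[w(ab^2)^{s+3}]$; (2) $[wab^3(ab^2)^sab^4]<[w(ab^2)^{s+3}]$.
   Context: Words are finite strings over $\{a,b\}$; $\phi$ is the monoid homomorphism with $\phi(a)=A,\phi(b)=B$, and $[w]=\mathrm{tr}(\phi(w))$. Fixed points are for the Möbius action on $\partial\mathcal{H}=\mathbb{P}^1\mathbb{R}$; $\alpha^\pm$ ($\beta^\pm$) are the attracting/repelling fixed points of $A$ ($B$), both equal to the unique fixed point if parabolic. With $\partial\mathcal{H}$ cyclically ordered and $[\alpha,\beta]$ the closed counterclockwise interval from $\alpha$ to $\beta$, let $I^+=\{\alpha^+\}$ if $\alpha^+=\beta^+$, and otherwise the one of $[\alpha^+,\beta^+],[\beta^+,\alpha^+]$ mapped into itself by both $A$ and $B$ (if it exists); define $I^-$ likewise with $A^{-1},B^{-1},\alpha^-,\beta^-$. The pair is coherently oriented if both exist, and well oriented if $A,B$ is coherently oriented but $A,B^{-1}$ is not. *)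

theory Defs
  imports "HOL-Analysis.Analysis"
begin

type_synonym mat2 = "int^2^2"

datatype letter = La | Lb
type_synonym word = "letter list"

fun phi :: "mat2 \<Rightarrow> mat2 \<Rightarrow> word \<Rightarrow> mat2" where
  "phi A B [] = mat 1"
| "phi A B (La # w) = A ** phi A B w"
| "phi A B (Lb # w) = B ** phi A B w"

definition wtr :: "mat2 \<Rightarrow> mat2 \<Rightarrow> word \<Rightarrow> int" where
  "wtr A B w = trace (phi A B w)"

definition SL2_nonneg :: "mat2 \<Rightarrow> bool" where
  "SL2_nonneg M \<longleftrightarrow> det M = 1 \<and> (\<forall>i j. M $ i $ j \<ge> 0)"

definition sl2inv :: "mat2 \<Rightarrow> mat2" where
  "sl2inv M = (\<chi> i j. if i = 1 \<and> j = 1 then M $ 2 $ 2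
                     else if i = 2 \<and> j = 2 then M $ 1 $ 1
                     else - M $ i $ j)"

text \<open>Boundary of the hyperbolic plane: P^1(R) = R \<union> {\<infinity>}.\<close>
datatype pt = Fin real | Inf

fun mob :: "mat2 \<Rightarrow> pt \<Rightarrow> pt" where
  "mob M (Fin x) =
     (let a = of_int (M$1$1); b = of_int (M$1$2); c = of_int (M$2$1); d = of_int (M$2$2)
      in if c * x + d = 0 then Inf else Fin ((a * x + b) / (c * x + d)))"
| "mob M Inf =
     (if M$2$1 = 0 then Inf else Fin (of_int (M$1$1) / of_int (M$2$1)))"

definition fixpt :: "mat2 \<Rightarrow> pt \<Rightarrow> bool" where
  "fixpt M p \<longleftrightarrow> mob M p = p"

text \<open>Eigenvalue of M on the line represented by a fixed point p
  (vector (x,1) for Fin x, vector (1,0) for Inf).\<close>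
fun fev :: "mat2 \<Rightarrow> pt \<Rightarrow> real" where
  "fev M (Fin x) = of_int (M$2$1) * x + of_int (M$2$2)"
| "fev M Inf = of_int (M$1$1)"

text \<open>Attracting fixed point: eigenvalue of largest modulus (derivative
  1/lambda^2 of smallest modulus); repelling: smallest modulus.
  For a parabolic map both are the unique fixed point.\<close>
definition attr :: "mat2 \<Rightarrow> pt" where
  "attr M = (THE p. fixpt M p \<and> (\<forall>q. fixpt M q \<longrightarrow> \<bar>fev M q\<bar> \<le> \<bar>fev M p\<bar>))"

definition repel :: "mat2 \<Rightarrow> pt" where
  "repel M = (THE p. fixpt M p \<and> (\<forall>q. fixpt M q \<longrightarrow> \<bar>fev M p\<bar> \<le> \<bar>fev M q\<bar>))"

text \<open>Closed counterclockwise interval [p,q] on the circle R \<union> {\<infinity>}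
  (positive direction = increasing reals, wrapping through \<infinity>).\<close>
fun ccint :: "pt \<Rightarrow> pt \<Rightarrow> pt set" where
  "ccint (Fin x) (Fin y) =
     (if x \<le> y then Fin ` {x..y} else Fin ` {x..} \<union> {Inf} \<union> Fin ` {..y})"
| "ccint (Fin x) Inf = Fin ` {x..} \<union> {Inf}"
| "ccint Inf (Fin y) = {Inf} \<union> Fin ` {..y}"
| "ccint Inf Inf = {Inf}"

definition inv_interval_exists :: "mat2 \<Rightarrow> mat2 \<Rightarrow> pt \<Rightarrow> pt \<Rightarrow> bool" where
  "inv_interval_exists M N p q \<longleftrightarrow>
     p = q \<or> (\<exists>J \<in> {ccint p q, ccint q p}. mob M ` J \<subseteq> J \<and> mob N ` J \<subseteq> J)"

definition coherently_oriented :: "mat2 \<Rightarrow> mat2 \<Rightarrow> bool" where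
  "coherently_oriented A B \<longleftrightarrow>
     inv_interval_exists A B (attr A) (attr B) \<and>
     inv_interval_exists (sl2inv A) (sl2inv B) (repel A) (repel B)"

definition well_oriented :: "mat2 \<Rightarrow> mat2 \<Rightarrow> bool" where
  "well_oriented A B \<longleftrightarrow> coherently_oriented A B \<and> \<not> coherently_oriented A (sl2inv B)"

end

(* Every phi(w) is an integer combination c0 + c1 A + c2 B + c3 AB whose coefficients are
   polynomials in x = tr A, t = tr B and z = tr AB, and the hypothesis tr AB = tr B^2 says
   z = t^2 - 2.  For u = ab^2 and the outer words k1, k2 put D n = phi(u^(n+3)) - phi(k1 u^n k2).
   Cayley-Hamilton for phi(u) gives D (n+2) = tr phi(u) * D (n+1) - D n, so D n stays entrywise
   positive as soon as D 0 > 0 and D 1 >= D 0.  Since A, B >= 0 and AB >= max(B, 1) entrywise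
   (the latter because A and B do not commute), these two facts follow from sign conditions on
   the coefficients of D 0 and D 1 - D 0, which are polynomial inequalities in x >= 2, t > x.
   Multiplying by phi(w) >= 0 and taking traces gives the strict inequalities. *)

theory Submission
  imports Defs
begin

lemma mat2_eqI:
  fixes M N :: mat2
  assumes "M$1$1 = N$1$1" "M$1$2 = N$1$2" "M$2$1 = N$2$1" "M$2$2 = N$2$2"
  shows "M = N"
  using assms by (simp add: vec_eq_iff forall_2)

lemma mat2_mult_entries:
  fixes M N :: mat2
  shows "(M ** N)$1$1 = M$1$1 * N$1$1 + M$1$2 * N$2$1"
    and "(M ** N)$1$2 = M$1$1 * N$1$2 + M$1$2 * N$2$2"
    and "(M ** N)$2$1 = M$2$1 * N$1$1 + M$2$2 * N$2$1"
    and "(M ** N)$2$2 = M$2$1 * N$1$2 + M$2$2 * N$2$2"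
  by (simp_all add: matrix_matrix_mult_def sum_2)

lemma trace_mat2: "trace (M :: mat2) = M$1$1 + M$2$2"
  by (simp add: trace_def sum_2)

lemma matrix_diff_ldistrib: "(A :: 'a::comm_ring_1^'n^'m) ** (B - C) = A ** B - A ** C"
  by (simp add: matrix_matrix_mult_def vec_eq_iff sum_subtractf right_diff_distrib)

lemma matrix_diff_rdistrib: "((A :: 'a::comm_ring_1^'n^'m) - B) ** C = A ** C - B ** C"
  by (simp add: matrix_matrix_mult_def vec_eq_iff sum_subtractf left_diff_distrib)

lemma mat_mult_component: "(mat c ** (M :: 'a::semiring_1^'n^'m)) $ i $ j = c * M $ i $ j"
  by (simp add: matrix_matrix_mult_def mat_def if_distrib if_distribR sum.delta cong: if_cong)

lemma mult_mat_component: "((M :: 'a::semiring_1^'n^'m) ** mat c) $ i $ j = M $ i $ j * c"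
  by (simp add: matrix_matrix_mult_def mat_def if_distrib if_distribR sum.delta' cong: if_cong)

lemma mat_mult_commute: "mat c ** (M :: 'a::comm_semiring_1^'n^'m) = M ** mat c"
  by (simp add: vec_eq_iff mat_mult_component mult_mat_component mult.commute)

lemma matrix_mult_mat_left_commute:
  "(A :: 'a::comm_semiring_1^'n^'m) ** (mat c ** B) = mat c ** (A ** B)"
  by (metis matrix_mul_assoc mat_mult_commute)

lemma sandwich_scaled_diff:
  fixes K1 K2 M N :: "'a::comm_ring_1^'n^'n"
  shows "K1 ** (mat c ** M - N) ** K2 = mat c ** (K1 ** M ** K2) - K1 ** N ** K2"
  by (simp add: matrix_diff_ldistrib matrix_diff_rdistrib matrix_mult_mat_left_commute)
    (simp add: matrix_mul_assoc)

lemma mat2_cayley_hamilton: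
  fixes M :: mat2
  assumes "det M = 1"
  shows "M ** M = mat (trace M) ** M - mat 1"
  using assms
  by (intro mat2_eqI) (simp_all add: mat2_mult_entries mat_mult_component trace_mat2 det_2 mat_def algebra_simps)

lemma trace_square_det1:
  fixes M :: mat2
  assumes "det M = 1"
  shows "trace (M ** M) = (trace M)\<^sup>2 - 2"
  using assms by (simp add: trace_mat2 mat2_mult_entries det_2 power2_eq_square algebra_simps)

lemma phi_append: "phi A B (u @ v) = phi A B u ** phi A B v"
proof (induction u)
  case (Cons l u)
  then show ?case by (cases l) (simp_all add: matrix_mul_assoc)
qed simp

lemma SL2_nonneg_entries:
  assumes "SL2_nonneg M"
  shows "0 \<le> M$i$j"
  using assms by (simp add: SL2_nonneg_def)

lemma SL2_nonneg_diag:
  assumes "SL2_nonneg M"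
  shows "1 \<le> M$1$1" and "1 \<le> M$2$2"
proof -
  have "M$1$1 * M$2$2 = 1 + M$1$2 * M$2$1"
    using assms by (simp add: SL2_nonneg_def det_2)
  moreover have "0 \<le> M$1$2 * M$2$1"
    using SL2_nonneg_entries[OF assms] by simp
  ultimately have "M$1$1 \<noteq> 0" "M$2$2 \<noteq> 0"
    by auto
  moreover have "0 \<le> M$1$1" "0 \<le> M$2$2"
    using SL2_nonneg_entries[OF assms] by simp_all
  ultimately show "1 \<le> M$1$1" "1 \<le> M$2$2"
    by linarith+
qed

lemma SL2_nonneg_mult:
  assumes "SL2_nonneg M" "SL2_nonneg N"
  shows "SL2_nonneg (M ** N)"
  using assms unfolding SL2_nonneg_def
  by (auto simp: det_mul mat2_mult_entries forall_2)

lemma SL2_nonneg_phi: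
  assumes "SL2_nonneg A" "SL2_nonneg B"
  shows "SL2_nonneg (phi A B w)"
proof (induction w)
  case Nil
  show ?case unfolding SL2_nonneg_def phi.simps(1) det_I by (simp add: mat_def)
next
  case (Cons l w)
  then show ?case by (cases l) (simp_all add: SL2_nonneg_mult assms)
qed

lemma SL2_nonneg_unipotent:
  assumes "SL2_nonneg M" and "M$1$2 = 0 \<or> M$2$1 = 0"
  shows "M$1$1 = 1" and "M$2$2 = 1"
proof -
  have "M$1$1 * M$2$2 = 1"
    using assms by (auto simp: SL2_nonneg_def det_2)
  then show "M$1$1 = 1" "M$2$2 = 1"
    using SL2_nonneg_diag[OF assms(1)] by (simp_all add: pos_zmult_eq_1_iff)
qed

lemma SL2_nonneg_mult_ge_right:
  assumes "SL2_nonneg A" "SL2_nonneg B"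
  shows "B$i$j \<le> (A ** B)$i$j"
proof -
  have "1 * B$1$j \<le> A$1$1 * B$1$j" "1 * B$2$j \<le> A$2$2 * B$2$j"
    using SL2_nonneg_diag[OF assms(1)] SL2_nonneg_entries[OF assms(2)] by (intro mult_right_mono; simp)+
  moreover have "0 \<le> A$1$2 * B$2$j" "0 \<le> A$2$1 * B$1$j"
    using SL2_nonneg_entries[OF assms(1)] SL2_nonneg_entries[OF assms(2)] by simp_all
  ultimately show ?thesis
    using exhaust_2[of i] exhaust_2[of j] by (auto simp: mat2_mult_entries)
qed

lemma SL2_nonneg_noncomm_mult_ge1:
  assumes A: "SL2_nonneg A" and B: "SL2_nonneg B" and noncomm: "A ** B \<noteq> B ** A"
  shows "1 \<le> (A ** B)$i$j"
proof -
  have triangular_commute: "A ** B = B ** A"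
    if "A$1$2 = 0 \<and> B$1$2 = 0 \<or> A$2$1 = 0 \<and> B$2$1 = 0"
    using that SL2_nonneg_unipotent[OF A] SL2_nonneg_unipotent[OF B]
    by (auto intro!: mat2_eqI simp: mat2_mult_entries)
  have ge_right: "y \<le> x * y" and ge_left: "y \<le> y * x" if "1 \<le> x" "0 \<le> y" for x y :: int
    using that mult_right_mono[of 1 x y] by (simp_all add: mult.commute)
  note A_entries = SL2_nonneg_diag[OF A] SL2_nonneg_entries[OF A]
  note B_entries = SL2_nonneg_diag[OF B] SL2_nonneg_entries[OF B]
  have "B$1$1 \<le> A$1$1 * B$1$1" "B$2$2 \<le> A$2$2 * B$2$2"
    "B$1$2 \<le> A$1$1 * B$1$2" "A$1$2 \<le> A$1$2 * B$2$2"
    "B$2$1 \<le> A$2$2 * B$2$1" "A$2$1 \<le> A$2$1 * B$1$1"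
    using A_entries B_entries by (simp_all add: ge_right ge_left)
  moreover have "0 \<le> A$1$2 * B$2$1" "0 \<le> A$2$1 * B$1$2"
    using A_entries B_entries by simp_all
  moreover have "1 \<le> A$1$2 + B$1$2" "1 \<le> A$2$1 + B$2$1"
    using A_entries(3)[of 1 2] B_entries(3)[of 1 2] A_entries(3)[of 2 1] B_entries(3)[of 2 1]
      triangular_commute noncomm
    by (smt (verit))+
  ultimately have "\<forall>i j. 1 \<le> (A ** B)$i$j"
    using A_entries(1,2) B_entries(1,2) unfolding forall_2 mat2_mult_entries by linarith
  then show ?thesis
    by blast
qed

lemma trace_mult_strict_mono:
  assumes "SL2_nonneg W" and "\<And>i j. M$i$j < N$i$j"
  shows "trace (W ** M) < trace (W ** N)"
proof -
  have "W$1$1 * M$1$1 < W$1$1 * N$1$1"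
    using assms SL2_nonneg_diag[OF assms(1)] by simp
  moreover have "W$i$j * M$j$i \<le> W$i$j * N$j$i" for i j
    using assms SL2_nonneg_entries[OF assms(1)] by (simp add: mult_left_mono less_imp_le)
  ultimately have "W$1$1 * M$1$1 + W$1$2 * M$2$1 + (W$2$1 * M$1$2 + W$2$2 * M$2$2)
    < W$1$1 * N$1$1 + W$1$2 * N$2$1 + (W$2$1 * N$1$2 + W$2$2 * N$2$2)"
    by (smt (verit))
  then show ?thesis
    by (simp add: trace_mat2 mat2_mult_entries)
qed

type_synonym coeffs = "int \<times> int \<times> int \<times> int"

fun basis_comb :: "mat2 \<Rightarrow> mat2 \<Rightarrow> coeffs \<Rightarrow> mat2" where
  "basis_comb A B (c0, c1, c2, c3) = mat c0 + mat c1 ** A + mat c2 ** B + mat c3 ** (A ** B)"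

text \<open>Left multiplication by \<open>A\<close> and \<open>B\<close> in the basis \<open>1, A, B, AB\<close>, with \<open>x = tr A\<close>,
  \<open>t = tr B\<close>, \<open>z = tr AB\<close>: it uses \<open>A\<^sup>2 = xA - 1\<close>, \<open>B\<^sup>2 = tB - 1\<close>,
  \<open>BA = xB + tA + (z - xt) - AB\<close> and \<open>BAB = zB + A - x\<close>.\<close>

fun mulA_coeffs :: "int \<Rightarrow> coeffs \<Rightarrow> coeffs" where
  "mulA_coeffs x (c0, c1, c2, c3) = (- c1, c0 + x * c1, - c3, c2 + x * c3)"

fun mulB_coeffs :: "int \<Rightarrow> int \<Rightarrow> int \<Rightarrow> coeffs \<Rightarrow> coeffs" where
  "mulB_coeffs x t z (c0, c1, c2, c3) =
     ((z - x * t) * c1 - c2 - x * c3, t * c1 + c3, c0 + x * c1 + t * c2 + z * c3, - c1)"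

fun word_coeffs :: "int \<Rightarrow> int \<Rightarrow> int \<Rightarrow> word \<Rightarrow> coeffs" where
  "word_coeffs x t z [] = (1, 0, 0, 0)"
| "word_coeffs x t z (La # w) = mulA_coeffs x (word_coeffs x t z w)"
| "word_coeffs x t z (Lb # w) = mulB_coeffs x t z (word_coeffs x t z w)"

lemma basis_comb_entry:
  "basis_comb A B (c0, c1, c2, c3) $ i $ j =
     c0 * mat 1 $ i $ j + c1 * A$i$j + c2 * B$i$j + c3 * (A ** B)$i$j"
  by (simp only: basis_comb.simps vector_add_component mat_mult_component) (simp add: mat_def)

lemma basis_comb_diff: "basis_comb A B c - basis_comb A B d = basis_comb A B (c - d)"
  by (cases c; cases d) (simp add: vec_eq_iff basis_comb_entry algebra_simps del: basis_comb.simps)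

lemma mulA_basis_comb:
  assumes "det A = 1"
  shows "A ** basis_comb A B c = basis_comb A B (mulA_coeffs (trace A) c)"
proof -
  obtain c0 c1 c2 c3 where c: "c = (c0, c1, c2, c3)"
    by (cases c)
  have "A$1$1 * A$2$2 - A$1$2 * A$2$1 = 1"
    using assms by (simp add: det_2)
  then show ?thesis
    unfolding c
    by (intro mat2_eqI; simp add: mat2_mult_entries basis_comb_entry trace_mat2 mat_def; algebra)
qed

lemma mulB_basis_comb:
  assumes "det B = 1"
  shows "B ** basis_comb A B c = basis_comb A B (mulB_coeffs (trace A) (trace B) (trace (A ** B)) c)"
proof -
  obtain c0 c1 c2 c3 where c: "c = (c0, c1, c2, c3)"
    by (cases c)
  have "B$1$1 * B$2$2 - B$1$2 * B$2$1 = 1"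
    using assms by (simp add: det_2)
  then show ?thesis
    unfolding c
    by (intro mat2_eqI; simp add: mat2_mult_entries basis_comb_entry trace_mat2 mat_def; algebra)
qed

lemma phi_eq_basis_comb:
  assumes "det A = 1" "det B = 1"
  shows "phi A B w = basis_comb A B (word_coeffs (trace A) (trace B) (trace (A ** B)) w)"
proof (induction w)
  case Nil
  show ?case by (simp add: vec_eq_iff basis_comb_entry)
next
  case (Cons l w)
  then show ?case by (cases l) (simp_all add: mulA_basis_comb mulB_basis_comb assms)
qed

fun admissible :: "coeffs \<Rightarrow> bool" where
  "admissible (c0, c1, c2, c3) \<longleftrightarrow>
     0 \<le> c1 \<and> 0 < c3 \<and> 0 < c2 + c3 \<and> 0 < c0 + c3 \<and> 0 < c0 + c2 + c3"

lemma admissible_comb_pos: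
  fixes e a b c :: int
  assumes "admissible (c0, c1, c2, c3)" "e = 0 \<or> e = 1" "0 \<le> a" "0 \<le> b" "b \<le> c" "1 \<le> c"
  shows "0 < c0 * e + c1 * a + c2 * b + c3 * c"
proof -
  have "0 \<le> c1 * a"
    using assms by simp
  moreover have "0 < c0 * e + c2 * b + c3 * c"
  proof (cases "0 \<le> c2")
    case True
    have "c3 \<le> c3 * c" "0 \<le> c2 * b"
      using assms True by simp_all
    moreover have "0 < c0 * e + c3"
      using assms by auto
    ultimately show ?thesis by linarith
  next
    case False
    have "(c2 + c3) \<le> (c2 + c3) * c" "c2 * c \<le> c2 * b"
      using assms False by (simp_all add: mult_le_cancel_left)
    moreover have "0 < c0 * e + c2 + c3"
      using assms by auto
    ultimately show ?thesis by (simp add: algebra_simps)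
  qed
  ultimately show ?thesis by linarith
qed

lemma basis_comb_pos:
  assumes "admissible c" "SL2_nonneg A" "SL2_nonneg B" "A ** B \<noteq> B ** A"
  shows "0 < basis_comb A B c $ i $ j"
proof -
  obtain c0 c1 c2 c3 where c: "c = (c0, c1, c2, c3)"
    by (cases c)
  have "0 < c0 * mat 1 $ i $ j + c1 * A$i$j + c2 * B$i$j + c3 * (A ** B)$i$j"
  proof (rule admissible_comb_pos)
    show "admissible (c0, c1, c2, c3)"
      using assms(1) c by simp
    show "mat 1 $ i $ j = 0 \<or> mat 1 $ i $ j = 1"
      by (simp add: mat_def)
    show "0 \<le> A$i$j" "0 \<le> B$i$j"
      using assms(2,3) by (simp_all add: SL2_nonneg_entries)
    show "B$i$j \<le> (A ** B)$i$j"
      using assms(2,3) by (rule SL2_nonneg_mult_ge_right)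
    show "1 \<le> (A ** B)$i$j"
      using assms(2-4) by (rule SL2_nonneg_noncomm_mult_ge1)
  qed
  then show ?thesis
    by (simp only: c basis_comb_entry)
qed

lemma second_order_recurrence_pos:
  fixes d :: "nat \<Rightarrow> int"
  assumes rec: "\<And>s. d (Suc (Suc s)) = \<tau> * d (Suc s) - d s"
    and "2 \<le> \<tau>" "0 < d 0" "d 0 \<le> d 1"
  shows "0 < d s"
proof -
  have "d 0 \<le> d s \<and> d s \<le> d (Suc s)"
  proof (induction s)
    case (Suc s)
    then have "0 \<le> d (Suc s)"
      using assms by linarith
    then have "2 * d (Suc s) \<le> \<tau> * d (Suc s)"
      using assms by (simp add: mult_right_mono)
    then show ?case
      using Suc rec[of s] by linarith
  qed (use assms in simp)
  then show ?thesis
    using assms by linarith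
qed

lemma sandwich_entry_pos:
  fixes P K1 K2 :: mat2 and Q :: "nat \<Rightarrow> mat2"
  assumes "det P = 1" and "2 \<le> trace P"
    and Q0: "Q 0 = mat 1" and QSuc: "\<And>s. Q (Suc s) = P ** Q s"
    and "0 < (Q 3 - K1 ** K2)$i$j"
    and "(Q 3 - K1 ** K2)$i$j \<le> (Q 4 - K1 ** P ** K2)$i$j"
  shows "0 < (Q (s + 3) - K1 ** Q s ** K2)$i$j"
proof -
  have Q_rec: "Q (Suc (Suc s)) = mat (trace P) ** Q (Suc s) - Q s" for s
  proof -
    have "Q (Suc (Suc s)) = (P ** P) ** Q s"
      by (simp add: QSuc matrix_mul_assoc)
    then show ?thesis
      by (simp only: mat2_cayley_hamilton[OF assms(1)] matrix_diff_rdistrib QSuc matrix_mul_assoc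
          matrix_mul_lid)
  qed
  define d where "d s = (Q (s + 3) - K1 ** Q s ** K2)$i$j" for s
  have d_rec: "d (Suc (Suc s)) = trace P * d (Suc s) - d s" for s
  proof -
    have Q_shift: "Q (Suc (Suc s) + 3) = mat (trace P) ** Q (Suc s + 3) - Q (s + 3)"
      using Q_rec[of "s + 3"] by simp
    show ?thesis
      unfolding d_def Q_shift Q_rec sandwich_scaled_diff
      by (simp only: vector_minus_component mat_mult_component) (simp add: algebra_simps)
  qed
  have "Q 1 = P"
    using QSuc[of 0] Q0 by simp
  then have d0: "d 0 = (Q 3 - K1 ** K2)$i$j" and d1: "d 1 = (Q 4 - K1 ** P ** K2)$i$j"
    by (simp_all add: d_def Q0)
  have "0 < d s"
  proof (rule second_order_recurrence_pos[where \<tau> = "trace P"])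
    show "d (Suc (Suc s)) = trace P * d (Suc s) - d s" for s
      by (rule d_rec)
    show "0 < d 0" "d 0 \<le> d 1"
      using assms(5,6) by (simp_all only: d0 d1)
  qed (rule assms(2))
  then show ?thesis
    by (simp add: d_def)
qed

definition gap_coeffs :: "(word \<Rightarrow> coeffs) \<Rightarrow> word \<Rightarrow> word \<Rightarrow> word \<Rightarrow> nat \<Rightarrow> coeffs" where
  "gap_coeffs C u k1 k2 n = C (concat (replicate (n + 3) u)) - C (k1 @ concat (replicate n u) @ k2)"

lemma phi_gap_eq_basis_comb:
  assumes "det A = 1" "det B = 1"
  shows "phi A B (concat (replicate (n + 3) u))
           - phi A B k1 ** phi A B (concat (replicate n u)) ** phi A B k2
         = basis_comb A B (gap_coeffs (word_coeffs (trace A) (trace B) (trace (A ** B))) u k1 k2 n)"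
proof -
  have "phi A B k1 ** phi A B (concat (replicate n u)) ** phi A B k2
      = phi A B (k1 @ concat (replicate n u) @ k2)"
    by (simp add: phi_append matrix_mul_assoc)
  then show ?thesis
    by (simp only: phi_eq_basis_comb[OF assms] basis_comb_diff gap_coeffs_def)
qed

lemma phi_sandwich_entry_less:
  fixes A B :: mat2 and u k1 k2 :: word
  defines "g \<equiv> gap_coeffs (word_coeffs (trace A) (trace B) (trace (A ** B))) u k1 k2"
  assumes A: "SL2_nonneg A" and B: "SL2_nonneg B" and noncomm: "A ** B \<noteq> B ** A"
    and gap0: "admissible (g 0)" and gap_step: "admissible (g 1 - g 0)"
  shows "(phi A B k1 ** phi A B (concat (replicate s u)) ** phi A B k2)$i$j
           < phi A B (concat (replicate (s + 3) u))$i$j"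
proof -
  define P where "P = phi A B u"
  define Q where "Q n = phi A B (concat (replicate n u))" for n
  define K1 where "K1 = phi A B k1"
  define K2 where "K2 = phi A B k2"
  have P: "SL2_nonneg P"
    unfolding P_def using A B by (rule SL2_nonneg_phi)
  have Q0: "Q 0 = mat 1" and QSuc: "Q (Suc n) = P ** Q n" for n
    by (simp_all add: Q_def P_def phi_append)
  have gap: "Q (n + 3) - K1 ** Q n ** K2 = basis_comb A B (g n)" for n
    using A B unfolding SL2_nonneg_def Q_def K1_def K2_def g_def by (simp add: phi_gap_eq_basis_comb)
  have "Q 1 = P"
    using QSuc[of 0] Q0 by simp
  then have gap0_mat: "Q 3 - K1 ** K2 = basis_comb A B (g 0)"
    and gap1_mat: "Q 4 - K1 ** P ** K2 = basis_comb A B (g 1)"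
    using gap[of 0] gap[of 1] by (simp_all add: Q0)
  have "0 < (Q (s + 3) - K1 ** Q s ** K2)$i$j"
  proof (rule sandwich_entry_pos[OF _ _ Q0 QSuc])
    show "det P = 1"
      using P by (simp add: SL2_nonneg_def)
    show "2 \<le> trace P"
      using SL2_nonneg_diag[OF P] by (simp add: trace_mat2)
    show "0 < (Q 3 - K1 ** K2)$i$j"
      unfolding gap0_mat using gap0 A B noncomm by (rule basis_comb_pos)
    have "0 < (basis_comb A B (g 1) - basis_comb A B (g 0))$i$j"
      unfolding basis_comb_diff using gap_step A B noncomm by (rule basis_comb_pos)
    then show "(Q 3 - K1 ** K2)$i$j \<le> (Q 4 - K1 ** P ** K2)$i$j"
      unfolding gap0_mat gap1_mat by simp
  qed
  then show ?thesis
    by (simp add: Q_def K1_def K2_def)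
qed

lemma wtr_sandwich_less:
  fixes A B :: mat2 and u k1 k2 w :: word
  defines "g \<equiv> gap_coeffs (word_coeffs (trace A) (trace B) (trace (A ** B))) u k1 k2"
  assumes "SL2_nonneg A" and "SL2_nonneg B" and "A ** B \<noteq> B ** A"
    and "admissible (g 0)" and "admissible (g 1 - g 0)"
  shows "wtr A B (w @ k1 @ concat (replicate s u) @ k2) < wtr A B (w @ concat (replicate (s + 3) u))"
proof -
  have "trace (phi A B w ** (phi A B k1 ** phi A B (concat (replicate s u)) ** phi A B k2))
      < trace (phi A B w ** phi A B (concat (replicate (s + 3) u)))"
    using assms unfolding g_def by (intro trace_mult_strict_mono SL2_nonneg_phi phi_sandwich_entry_less)
  then show ?thesis
    by (simp add: wtr_def phi_append matrix_mul_assoc)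
qed

text \<open>After substituting \<open>x = p + 2\<close>, \<open>t = p + q + 3\<close> every admissibility inequality below
  becomes a polynomial in \<open>p, q \<ge> 0\<close> with nonnegative coefficients and positive constant term.\<close>

lemma admissible_gap_ab4_ab3:
  fixes x t :: int
  assumes "2 \<le> x" and "x < t"
  defines "g \<equiv> gap_coeffs (word_coeffs x t (t\<^sup>2 - 2)) [La, Lb, Lb] [La, Lb, Lb, Lb, Lb] [La, Lb, Lb, Lb]"
  shows "admissible (g 0)" and "admissible (g 1 - g 0)"
proof -
  have g0: "g 0 =
     (3 * t - t^3 + x,
      1 + x * (t^3 - 3 * t) - x^2,
      - 1,
      t^5 - 4 * t^3 + 3 * t - x * (t^4 - 2 * t^2 - 1) + x^2 * t)"
    by (simp add: g_def gap_coeffs_def numeral_eq_Suc power_Suc algebra_simps)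
  have g1: "g 1 - g 0 =
     (5 * t^4 - t^6 + t^3 - 6 * t^2 - 3 * t + 1 + x * (2 * t^3 - 5 * t - 1) - x^2,
      t^3 - 2 * t - 1 + x * (t^6 - 5 * t^4 - t^3 + 6 * t^2 + 3 * t - 2) - x^2 * (2 * t^3 - 5 * t - 1) + x^3,
      2 * t - t^3 + 1 + x,
      t^8 - 6 * t^6 - t^5 + 11 * t^4 + 4 * t^3 - 7 * t^2 - 3 * t + 1 - x * (t^7 - 3 * t^5 - t^4 - t^3 + 2 * t^2 + 4 * t + 1) + x^2 * (2 * t^4 - 4 * t^2 - t - 1) - x^3 * t)"
    by (simp add: g_def gap_coeffs_def numeral_eq_Suc power_Suc algebra_simps)
  obtain p q :: nat where x: "x = int p + 2" and t: "t = int p + int q + 3"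
    using assms(1,2) by (intro that[of "nat (x - 2)" "nat (t - x - 1)"]) auto
  show "admissible (g 0)"
    unfolding g0 x t
    by (simp add: numeral_eq_Suc power_Suc algebra_simps)
      (intro conjI add_pos_nonneg add_nonneg_nonneg mult_nonneg_nonneg; simp)
  show "admissible (g 1 - g 0)"
    unfolding g1 x t
    by (simp add: numeral_eq_Suc power_Suc algebra_simps)
      (intro conjI add_pos_nonneg add_nonneg_nonneg mult_nonneg_nonneg; simp)
qed

lemma admissible_gap_ab3_ab4:
  fixes x t :: int
  assumes "2 \<le> x" and "x < t"
  defines "g \<equiv> gap_coeffs (word_coeffs x t (t\<^sup>2 - 2)) [La, Lb, Lb] [La, Lb, Lb, Lb] [La, Lb, Lb, Lb, Lb]"
  shows "admissible (g 0)" and "admissible (g 1 - g 0)"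
proof -
  have g0: "g 0 =
     (2 * t - t^3 + x,
      t^2 - 1 + x * (t^3 - 3 * t) - x^2,
      1,
      t^5 - 4 * t^3 + 3 * t - x * (t^4 - 2 * t^2) + x^2 * t)"
    by (simp add: g_def gap_coeffs_def numeral_eq_Suc power_Suc algebra_simps)
  have g1: "g 1 - g 0 =
     (4 * t^4 - t^6 + t^3 - 4 * t^2 - 2 * t + 1 + x * (2 * t^3 - 4 * t - 1) - x^2,
      t^5 - 3 * t^3 - t^2 + 2 * t + 1 + x * (t^6 - 5 * t^4 - t^3 + 5 * t^2 + 3 * t) - x^2 * (2 * t^3 - 5 * t - 1) + x^3,
      t^3 - 2 * t - 1 - x,
      t^8 - 6 * t^6 - t^5 + 11 * t^4 + 4 * t^3 - 7 * t^2 - 3 * t + 1 - x * (t^7 - 3 * t^5 - t^4 + 2 * t^2 + 2 * t) + x^2 * (2 * t^4 - 4 * t^2 - t) - x^3 * t)"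
    by (simp add: g_def gap_coeffs_def numeral_eq_Suc power_Suc algebra_simps)
  obtain p q :: nat where x: "x = int p + 2" and t: "t = int p + int q + 3"
    using assms(1,2) by (intro that[of "nat (x - 2)" "nat (t - x - 1)"]) auto
  show "admissible (g 0)"
    unfolding g0 x t
    by (simp add: numeral_eq_Suc power_Suc algebra_simps)
      (intro conjI add_pos_nonneg add_nonneg_nonneg mult_nonneg_nonneg; simp)
  show "admissible (g 1 - g 0)"
    unfolding g1 x t
    by (simp add: numeral_eq_Suc power_Suc algebra_simps)
      (intro conjI add_pos_nonneg add_nonneg_nonneg mult_nonneg_nonneg; simp)
qed

theorem lemma6p4:
  fixes A B :: mat2 and w :: word and s :: nat
  assumes "SL2_nonneg A" and "SL2_nonneg B"
    and "A ** B \<noteq> B ** A"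
    and "well_oriented A B"
    and "trace A < trace B"
    and "trace (A ** B) = trace (B ** B)"
    and "w = [] \<or> hd w = La"
  shows "(wtr A B (w @ [La, Lb, Lb, Lb, Lb] @ concat (replicate s [La, Lb, Lb]) @ [La, Lb, Lb, Lb])
           < wtr A B (w @ concat (replicate (s + 3) [La, Lb, Lb]))) \<and>
         (wtr A B (w @ [La, Lb, Lb, Lb] @ concat (replicate s [La, Lb, Lb]) @ [La, Lb, Lb, Lb, Lb])
           < wtr A B (w @ concat (replicate (s + 3) [La, Lb, Lb])))"
proof -
  have x: "2 \<le> trace A"
    using SL2_nonneg_diag[OF assms(1)] by (simp add: trace_mat2)
  have z: "trace (A ** B) = (trace B)\<^sup>2 - 2"
    using assms(2,6) by (simp add: SL2_nonneg_def trace_square_det1)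
  note ab4_ab3 = admissible_gap_ab4_ab3[OF x assms(5), folded z]
  note ab3_ab4 = admissible_gap_ab3_ab4[OF x assms(5), folded z]
  show ?thesis
    using wtr_sandwich_less[OF assms(1-3) ab4_ab3] wtr_sandwich_less[OF assms(1-3) ab3_ab4]
    by blast
qed

end
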